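(* For $k,\ell\in\mathbb Z_{\ge0}$ and $s\in\mathbb C$: $p_+^{(k,\ell)}(t)=\sum_{m=0}^{\ell}k^{\underline m}P_m^{(\ell-m,-m)}(0)t^m$ if $k\ge\ell$, and $=\sum_{m=0}^{k}\ell^{\underline m}P_m^{(k-m,-m)}(0)t^m$ if $k<\ell$; $p_-^{(k,\ell)}(t)=\sum_{m=0}^{\ell}k^{\underline m}P_m^{(-m,\ell-m)}(0)t^m$ if $k\ge\ell$, and $=\sum_{m=0}^{k}\ell^{\underline m}P_m^{(-m,k-m)}(0)t^m$ if $k<\ell$; $p_c^{(s;k)}(t)=\sum_{m=0}^kk^{\underline m}P_m^{(\frac{k+s-2m}2,\frac{k-s-2m}2)}(0)t^m$. In particular $p_c^{(\pm k;k)}(t)=p_\pm^{(k,k)}(t)$.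
   Context: $r^{\underline m}=r(r-1)\cdots(r-m+1)$, $r^{\overline m}=r(r+1)\cdots(r+m-1)$ (empty products $=1$). For complex $a$ and $m\in\mathbb Z_{\ge0}$, $\binom am=a(a-1)\cdots(a-m+1)/m!$. Jacobi polynomials: $P_m^{(\alpha,\beta)}(z)=\sum_{j=0}^m\binom{m+\alpha}{m-j}\binom{m+\beta}{j}\big(\frac{z-1}2\big)^j\big(\frac{z+1}2\big)^{m-j}$ for $\alpha,\beta\in\mathbb C$. Cayley continuants $\mathrm{Cay}_m(x;y)=\sum_{j=0}^m\binom mj(\frac{x+y}2)^{\underline j}(\frac{x-y}2)^{\overline{m-j}}$ (the tridiagonal $m\times m$ determinant with diagonal $x$, superdiagonal $1,\dots,m-1$, subdiagonal $y,y-1,\dots,y-m+2$). Polynomials: $p_\pm^{(k,\ell)}(t)=\sum_{m=0}^{\min(k,\ell)}\frac{(\pm1)^m}{2^m}m!\binom km\binom\ell mt^m$, $p_c^{(s;k)}(t)=\sum_{m=0}^k\frac1{2^m}\binom km\mathrm{Cay}_m(s;k)t^m$. *)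

theory Defs
  imports Complex_Main
begin

definition ffall :: "complex \<Rightarrow> nat \<Rightarrow> complex" where
  "ffall r m = (\<Prod>i<m. r - of_nat i)"

definition rfact :: "complex \<Rightarrow> nat \<Rightarrow> complex" where
  "rfact r m = (\<Prod>i<m. r + of_nat i)"

definition jacobiP :: "nat \<Rightarrow> complex \<Rightarrow> complex \<Rightarrow> complex \<Rightarrow> complex" where
  "jacobiP m \<alpha> \<beta> z = (\<Sum>j=0..m. ((of_nat m + \<alpha>) gchoose (m - j)) * ((of_nat m + \<beta>) gchoose j)
      * ((z - 1) / 2) ^ j * ((z + 1) / 2) ^ (m - j))"

definition cay :: "nat \<Rightarrow> complex \<Rightarrow> complex \<Rightarrow> complex" where
  "cay m x y = (\<Sum>j=0..m. of_nat (m choose j) * ffall ((x + y) / 2) j * rfact ((x - y) / 2) (m - j))"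

definition p_plus :: "nat \<Rightarrow> nat \<Rightarrow> complex \<Rightarrow> complex" where
  "p_plus k l t = (\<Sum>m=0..min k l. (1 / 2 ^ m) * of_nat (fact m) * of_nat (k choose m) * of_nat (l choose m) * t ^ m)"

definition p_minus :: "nat \<Rightarrow> nat \<Rightarrow> complex \<Rightarrow> complex" where
  "p_minus k l t = (\<Sum>m=0..min k l. ((-1) ^ m / 2 ^ m) * of_nat (fact m) * of_nat (k choose m) * of_nat (l choose m) * t ^ m)"

definition p_c :: "complex \<Rightarrow> nat \<Rightarrow> complex \<Rightarrow> complex" where
  "p_c s k t = (\<Sum>m=0..k. (1 / 2 ^ m) * of_nat (k choose m) * cay m s (of_nat k) * t ^ m)"

end

theory Submission
  imports Defs
begin

text \<open>At \<open>z = 0\<close> the Jacobi polynomial is \<open>2\<^sup>-\<^sup>m\<close> times the alternating convolution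
  \<open>\<Sum>\<^sub>j (-1)\<^sup>j C(m+\<alpha>, m-j) C(m+\<beta>, j)\<close>. If \<open>\<beta> = -m\<close> (or \<open>\<alpha> = -m\<close>) only the term
  \<open>j = 0\<close> (or \<open>j = m\<close>) survives, which gives the coefficients of \<open>p\<^sub>\<plusminus>\<close>. For \<open>p\<^sub>c\<close>, the
  rising factorial of \<open>(s-k)/2\<close> is a signed falling factorial of \<open>(k-s)/2\<close>, so the Cayley
  continuant is the same alternating convolution with \<open>m+\<alpha> = (k+s)/2\<close> and
  \<open>m+\<beta> = (k-s)/2\<close>, scaled by \<open>2\<^sup>m m!\<close>.\<close>

lemma ffall_eq_fact_gchoose: "ffall a m = fact m * (a gchoose m)"
  by (simp add: ffall_def gbinomial_mult_fact atLeast0LessThan)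

lemma ffall_of_nat: "ffall (of_nat k) m = of_nat (fact m) * of_nat (k choose m)"
  by (simp add: ffall_eq_fact_gchoose binomial_gbinomial)

lemma rfact_uminus: "rfact (- b) m = (-1) ^ m * ffall b m"
proof -
  have "rfact (- b) m = (\<Prod>i<m. - (b - of_nat i))"
    unfolding rfact_def by (simp add: algebra_simps)
  also have "\<dots> = (-1) ^ m * ffall b m"
    unfolding ffall_def by (subst prod_uminus) simp
  finally show ?thesis .
qed

lemma jacobiP_at_0:
  "jacobiP m \<alpha> \<beta> 0 =
     (\<Sum>j=0..m. (-1) ^ j * ((of_nat m + \<alpha>) gchoose (m - j)) * ((of_nat m + \<beta>) gchoose j)) / 2 ^ m"
  unfolding jacobiP_def sum_divide_distrib
proof (rule sum.cong[OF refl])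
  fix j assume "j \<in> {0..m}"
  then have "(2::complex) ^ m = 2 ^ j * 2 ^ (m - j)"
    by (simp flip: power_add)
  moreover have "((0 - 1) / 2 :: complex) ^ j = (-1) ^ j / 2 ^ j"
    by (simp only: diff_0 power_divide)
  ultimately show "((of_nat m + \<alpha>) gchoose (m - j)) * ((of_nat m + \<beta>) gchoose j)
      * ((0 - 1) / 2) ^ j * ((0 + 1) / 2) ^ (m - j)
    = (-1) ^ j * ((of_nat m + \<alpha>) gchoose (m - j)) * ((of_nat m + \<beta>) gchoose j) / 2 ^ m"
    by (simp add: power_divide field_simps)
qed

lemma jacobiP_beta_neg_at_0:
  "jacobiP m \<alpha> (- of_nat m) 0 = ((of_nat m + \<alpha>) gchoose m) / 2 ^ m"
proof -
  have "(\<Sum>j=0..m. (-1) ^ j * ((of_nat m + \<alpha>) gchoose (m - j)) * ((of_nat m + - of_nat m) gchoose j))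
      = (\<Sum>j=0..m. if j = 0 then (of_nat m + \<alpha>) gchoose m else 0)"
    by (rule sum.cong) (auto simp: gbinomial_0_left)
  then show ?thesis
    by (simp add: jacobiP_at_0)
qed

lemma jacobiP_alpha_neg_at_0:
  "jacobiP m (- of_nat m) \<beta> 0 = (-1) ^ m * ((of_nat m + \<beta>) gchoose m) / 2 ^ m"
proof -
  have "(\<Sum>j=0..m. (-1) ^ j * ((of_nat m + - of_nat m) gchoose (m - j)) * ((of_nat m + \<beta>) gchoose j))
      = (\<Sum>j=0..m. if j = m then (-1) ^ m * ((of_nat m + \<beta>) gchoose m) else 0)"
    by (rule sum.cong) (auto simp: gbinomial_0_left)
  then show ?thesis
    by (simp add: jacobiP_at_0)
qed

lemma p_plus_commute: "p_plus k l t = p_plus l k t"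
  unfolding p_plus_def by (simp add: min.commute mult_ac)

lemma p_minus_commute: "p_minus k l t = p_minus l k t"
  unfolding p_minus_def by (simp add: min.commute mult_ac)

lemma p_plus_eq_jacobiP_sum:
  assumes "l \<le> k"
  shows "p_plus k l t =
    (\<Sum>m=0..l. ffall (of_nat k) m * jacobiP m (of_nat l - of_nat m) (- of_nat m) 0 * t ^ m)"
  unfolding p_plus_def using assms
  by (intro sum.cong) (auto simp: min_def jacobiP_beta_neg_at_0 ffall_of_nat binomial_gbinomial)

lemma p_minus_eq_jacobiP_sum:
  assumes "l \<le> k"
  shows "p_minus k l t =
    (\<Sum>m=0..l. ffall (of_nat k) m * jacobiP m (- of_nat m) (of_nat l - of_nat m) 0 * t ^ m)"
  unfolding p_minus_def using assms
  by (intro sum.cong) (auto simp: min_def jacobiP_alpha_neg_at_0 ffall_of_nat binomial_gbinomial)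

lemma cay_eq_jacobiP:
  "cay m s y = 2 ^ m * fact m * jacobiP m ((y + s - 2 * of_nat m) / 2) ((y - s - 2 * of_nat m) / 2) 0"
proof -
  define a where "a = (s + y) / 2"
  define b where "b = (y - s) / 2"
  have upper_params: "of_nat m + (y + s - 2 * of_nat m) / 2 = a" "of_nat m + (y - s - 2 * of_nat m) / 2 = b"
    unfolding a_def b_def by (simp_all add: field_simps)
  have "cay m s y = (\<Sum>j=0..m. fact m * ((-1) ^ (m - j) * (a gchoose j) * (b gchoose (m - j))))"
    unfolding cay_def
  proof (rule sum.cong[OF refl])
    fix j assume "j \<in> {0..m}"
    then have fact_m: "fact m = fact j * fact (m - j) * (of_nat (m choose j) :: complex)"
      by (metis atLeastAtMost_iff binomial_fact_lemma of_nat_fact of_nat_mult)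
    have "(s - y) / 2 = - b"
      unfolding b_def by (simp add: field_simps)
    then show "of_nat (m choose j) * ffall ((s + y) / 2) j * rfact ((s - y) / 2) (m - j)
        = fact m * ((-1) ^ (m - j) * (a gchoose j) * (b gchoose (m - j)))"
      by (simp add: fact_m rfact_uminus ffall_eq_fact_gchoose mult_ac flip: a_def)
  qed
  also have "\<dots> = fact m * (\<Sum>j=0..m. (-1) ^ j * (a gchoose (m - j)) * (b gchoose j))"
    by (subst sum.atLeastAtMost_rev) (simp add: sum_distrib_left mult_ac)
  finally show ?thesis
    by (simp add: jacobiP_at_0 upper_params)
qed

lemma p_c_eq_jacobiP_sum:
  "p_c s k t = (\<Sum>m=0..k. ffall (of_nat k) m
      * jacobiP m ((of_nat k + s - 2 * of_nat m) / 2) ((of_nat k - s - 2 * of_nat m) / 2) 0 * t ^ m)"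
  unfolding p_c_def cay_eq_jacobiP
  by (intro sum.cong) (auto simp: ffall_of_nat)

lemma p_c_of_nat_eq_p_plus: "p_c (of_nat k) k t = p_plus k k t"
proof -
  have "(of_nat k + of_nat k - 2 * of_nat m) / 2 = (of_nat k - of_nat m :: complex)"
    and "(of_nat k - of_nat k - 2 * of_nat m) / 2 = (- of_nat m :: complex)" for m
    by (simp_all add: field_simps)
  then show ?thesis
    unfolding p_c_eq_jacobiP_sum p_plus_eq_jacobiP_sum[OF order_refl] by (simp only:)
qed

lemma p_c_uminus_of_nat_eq_p_minus: "p_c (- of_nat k) k t = p_minus k k t"
proof -
  have "(of_nat k + - of_nat k - 2 * of_nat m) / 2 = (- of_nat m :: complex)"
    and "(of_nat k - - of_nat k - 2 * of_nat m) / 2 = (of_nat k - of_nat m :: complex)" for m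
    by (simp_all add: field_simps)
  then show ?thesis
    unfolding p_c_eq_jacobiP_sum p_minus_eq_jacobiP_sum[OF order_refl] by (simp only:)
qed

theorem theorem7p1:
  fixes k l :: nat and s t :: complex
  shows
   "p_plus k l t =
      (if k \<ge> l
       then (\<Sum>m=0..l. ffall (of_nat k) m * jacobiP m (of_nat l - of_nat m) (- of_nat m) 0 * t ^ m)
       else (\<Sum>m=0..k. ffall (of_nat l) m * jacobiP m (of_nat k - of_nat m) (- of_nat m) 0 * t ^ m))
    \<and> p_minus k l t =
      (if k \<ge> l
       then (\<Sum>m=0..l. ffall (of_nat k) m * jacobiP m (- of_nat m) (of_nat l - of_nat m) 0 * t ^ m)
       else (\<Sum>m=0..k. ffall (of_nat l) m * jacobiP m (- of_nat m) (of_nat k - of_nat m) 0 * t ^ m))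
    \<and> p_c s k t =
      (\<Sum>m=0..k. ffall (of_nat k) m
          * jacobiP m ((of_nat k + s - 2 * of_nat m) / 2) ((of_nat k - s - 2 * of_nat m) / 2) 0 * t ^ m)
    \<and> p_c (of_nat k) k t = p_plus k k t
    \<and> p_c (- of_nat k) k t = p_minus k k t"
  using p_plus_eq_jacobiP_sum[of l k] p_plus_eq_jacobiP_sum[of k l] p_plus_commute[of k l t]
    p_minus_eq_jacobiP_sum[of l k] p_minus_eq_jacobiP_sum[of k l] p_minus_commute[of k l t]
    p_c_eq_jacobiP_sum p_c_of_nat_eq_p_plus p_c_uminus_of_nat_eq_p_minus
  by auto

end
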